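(* Suppose $G$ is a complete graph whose travel times satisfy the triangle inequality $t_{i,j}\le t_{i,k}+t_{k,j}$ for all distinct $i,j,k\in V$. Let $C_1,\dots,C_m$ be length-feasible cycles whose node sets cover $V$ (every node lies in at least one $C_r$). Then there exist $m'\le m$ length-feasible cycles whose node sets partition $V$; in particular the minimum number of length-feasible cycles needed to cover $V$ equals the minimum number needed to partition $V$.
   Context: $G=(V,E)$ is an undirected graph with critical times $q_i>0$ ($i\in V$) and travel times $t_{i,j}=t_{j,i}\ge 0$ ($\{i,j\}\in E$). A cycle is $C=(i_0,i_1,\dots,i_K)$ with $K\ge1$, $i_K=i_0$, $i_0,\dots,i_{K-1}$ distinct and $\{i_{k-1},i_k\}\in E$ for all $k$ when $K\ge2$; for $K=1$ it is the singleton cycle on node $i_0$, with travel time $0$. Its travel time is $t(C)=\sum_{k=1}^K t_{i_{k-1},i_k}$ (for $K\ge2$) and its minimum critical time is $q(C)=\min_{0\le k\le K}q_{i_k}$. $C$ is length-feasible if $t(C)\le q(C)$. *)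

theory Defs
  imports Complex_Main
begin

text \<open>A cycle (i_0,...,i_{K-1},i_0) is represented by the list [i_0,...,i_{K-1}] of its
  K distinct nodes; K = length of the list, and K = 1 is the singleton cycle.\<close>

definition is_cycle :: "'a set \<Rightarrow> 'a set set \<Rightarrow> 'a list \<Rightarrow> bool" where
  "is_cycle V E xs \<longleftrightarrow> xs \<noteq> [] \<and> distinct xs \<and> set xs \<subseteq> V \<and>
     (length xs \<ge> 2 \<longrightarrow>
        (\<forall>k < length xs. {xs ! k, xs ! ((k + 1) mod length xs)} \<in> E))"

definition cycle_time :: "('a \<Rightarrow> 'a \<Rightarrow> real) \<Rightarrow> 'a list \<Rightarrow> real" where
  "cycle_time t xs = (if length xs \<le> 1 then 0
     else (\<Sum>k < length xs. t (xs ! k) (xs ! ((k + 1) mod length xs))))"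

definition cycle_min_crit :: "('a \<Rightarrow> real) \<Rightarrow> 'a list \<Rightarrow> real" where
  "cycle_min_crit q xs = Min (q ` set xs)"

definition length_feasible ::
  "'a set \<Rightarrow> 'a set set \<Rightarrow> ('a \<Rightarrow> 'a \<Rightarrow> real) \<Rightarrow> ('a \<Rightarrow> real) \<Rightarrow> 'a list \<Rightarrow> bool" where
  "length_feasible V E t q xs \<longleftrightarrow> is_cycle V E xs \<and> cycle_time t xs \<le> cycle_min_crit q xs"

definition covers :: "'a set \<Rightarrow> 'a list list \<Rightarrow> bool" where
  "covers V Cs \<longleftrightarrow> (\<Union>C \<in> set Cs. set C) = V"

definition partitions :: "'a set \<Rightarrow> 'a list list \<Rightarrow> bool" where
  "partitions V Cs \<longleftrightarrow> covers V Cs \<and>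
     (\<forall>i < length Cs. \<forall>j < length Cs. i \<noteq> j \<longrightarrow> set (Cs ! i) \<inter> set (Cs ! j) = {})"

end

theory Submission
  imports Defs
begin

text \<open>Dropping a node from a cycle replaces two consecutive legs through it by the direct leg,
  which by the triangle inequality does not increase the travel time; the minimum critical time
  can only grow, and in a complete graph every nonempty list of distinct nodes is a cycle. Hence
  every nonempty sub-sequence of a length-feasible cycle is length-feasible. Given a cover
  \<open>C\<^sub>1, \<dots>, C\<^sub>m\<close>, keeping from each \<open>C\<^sub>r\<close> only the nodes not in
  \<open>C\<^sub>1, \<dots>, C\<^sub>r\<^sub>-\<^sub>1\<close> (and discarding empty remainders) yields a partition
  into at most \<open>m\<close> length-feasible cycles.\<close>

definition triangle_on :: "'a set \<Rightarrow> ('a \<Rightarrow> 'a \<Rightarrow> real) \<Rightarrow> bool" where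
  "triangle_on V t \<longleftrightarrow> (\<forall>i\<in>V. \<forall>j\<in>V. \<forall>k\<in>V.
     i \<noteq> j \<longrightarrow> i \<noteq> k \<longrightarrow> j \<noteq> k \<longrightarrow> t i j \<le> t i k + t k j)"

definition complete_edges :: "'a set \<Rightarrow> 'a set set" where
  "complete_edges V = {{i, j} | i j. i \<in> V \<and> j \<in> V \<and> i \<noteq> j}"

fun path_time :: "('a \<Rightarrow> 'a \<Rightarrow> real) \<Rightarrow> 'a list \<Rightarrow> real" where
  "path_time t (x # y # zs) = t x y + path_time t (y # zs)"
| "path_time t _ = 0"

lemma path_time_snoc:
  "path_time t (xs @ [y]) = path_time t xs + (if xs = [] then 0 else t (last xs) y)"
  by (induction t xs rule: path_time.induct) auto

lemma path_time_conv_sum: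
  "path_time t xs = (\<Sum>k < length xs - 1. t (xs ! k) (xs ! (k + 1)))"
proof (induction t xs rule: path_time.induct)
  case (1 t x y zs)
  then show ?case
    by (simp add: sum.lessThan_Suc_shift del: sum.lessThan_Suc)
qed auto

lemma cycle_time_conv_path_time:
  assumes "length xs \<ge> 2"
  shows "cycle_time t xs = path_time t (xs @ [hd xs])"
proof -
  let ?n = "length xs"
  have "path_time t (xs @ [hd xs]) = (\<Sum>k < ?n. t ((xs @ [hd xs]) ! k) ((xs @ [hd xs]) ! (k + 1)))"
    by (simp add: path_time_conv_sum)
  also have "\<dots> = (\<Sum>k < ?n. t (xs ! k) (xs ! ((k + 1) mod ?n)))"
  proof (rule sum.cong)
    fix k assume k: "k \<in> {..<?n}"
    show "t ((xs @ [hd xs]) ! k) ((xs @ [hd xs]) ! (k + 1)) = t (xs ! k) (xs ! ((k + 1) mod ?n))"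
    proof (cases "k + 1 < ?n")
      case True
      then show ?thesis using k by (simp add: nth_append)
    next
      case False
      then have "k + 1 = ?n" using k by simp
      then show ?thesis using k assms by (cases xs) (auto simp: nth_append nth_Cons')
    qed
  qed simp
  finally show ?thesis using assms by (simp add: cycle_time_def)
qed

lemma cycle_time_rotate1:
  assumes "length xs \<ge> 2"
  shows "cycle_time t (rotate1 xs) = cycle_time t xs"
proof -
  obtain x y zs where xs: "xs = x # y # zs"
    using assms by (auto simp: numeral_2_eq_2 Suc_le_length_iff)
  have "cycle_time t (rotate1 xs) = path_time t ((y # zs @ [x]) @ [y])"
    using cycle_time_conv_path_time[of "y # zs @ [x]"] xs by simp
  also have "\<dots> = path_time t (y # zs @ [x]) + t x y"
    by (subst path_time_snoc) simp
  also have "\<dots> = path_time t (x # y # zs @ [x])" by simp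
  finally show ?thesis using cycle_time_conv_path_time[OF assms] xs by simp
qed

lemma cycle_time_rotate:
  assumes "length xs \<ge> 2"
  shows "cycle_time t (rotate n xs) = cycle_time t xs"
  using assms by (induction n) (simp_all add: cycle_time_rotate1)

lemma cycle_time_shortcut:
  assumes tri: "triangle_on V t" and dist: "distinct (us @ v # ws)"
    and sub: "set (us @ v # ws) \<subseteq> V" and len: "length (us @ v # ws) \<ge> 3"
  shows "cycle_time t (us @ ws) \<le> cycle_time t (us @ v # ws)"
proof -
  txt \<open>Rotating \<open>v\<close> to the end, only the closing legs of the two cycles differ.\<close>
  define A where "A = ws @ us"
  have lenA: "length A \<ge> 2" using len by (simp add: A_def)
  then have "A \<noteq> []" by auto
  have "cycle_time t (us @ ws) = cycle_time t A"
    using cycle_time_rotate[of "us @ ws" t "length us"] len by (simp add: A_def rotate_append)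
  also have "\<dots> = path_time t A + t (last A) (hd A)"
    using cycle_time_conv_path_time[OF lenA] \<open>A \<noteq> []\<close> by (simp add: path_time_snoc)
  finally have short: "cycle_time t (us @ ws) = path_time t A + t (last A) (hd A)" .
  have "cycle_time t (us @ v # ws) = cycle_time t (A @ [v])"
    using cycle_time_rotate[of "(us @ [v]) @ ws" t "length (us @ [v])"] len
    by (simp only: rotate_append) (simp add: A_def)
  also have "\<dots> = path_time t ((A @ [v]) @ [hd A])"
    using cycle_time_conv_path_time[of "A @ [v]"] lenA \<open>A \<noteq> []\<close> by simp
  also have "\<dots> = path_time t A + t (last A) v + t v (hd A)"
    using \<open>A \<noteq> []\<close> by (simp only: path_time_snoc) simp
  finally have long: "cycle_time t (us @ v # ws) = path_time t A + t (last A) v + t v (hd A)" .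
  have "distinct A" "v \<notin> set A" "set A \<subseteq> V" "v \<in> V"
    using dist sub by (auto simp: A_def)
  moreover have "last A \<noteq> hd A"
    using \<open>distinct A\<close> lenA by (cases A rule: remdups_adj.cases) auto
  ultimately have "t (last A) (hd A) \<le> t (last A) v + t v (hd A)"
    using tri \<open>A \<noteq> []\<close> unfolding triangle_on_def by (metis last_in_set hd_in_set subsetD)
  then show ?thesis using short long by simp
qed

lemma cycle_time_filter_le:
  assumes tri: "triangle_on V t" and "distinct xs" "set xs \<subseteq> V"
    and "length (filter P xs) \<ge> 2"
  shows "cycle_time t (filter P xs) \<le> cycle_time t xs"
  using assms(2-4)
proof (induction "length xs - length (filter P xs)" arbitrary: xs rule: less_induct)
  case less
  show ?case
  proof (cases "\<forall>x \<in> set xs. P x")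
    case True
    then show ?thesis by simp
  next
    case False
    then obtain us v ws where xs: "xs = us @ v # ws" and "\<not> P v"
      by (metis split_list)
    then have filter_eq: "filter P (us @ ws) = filter P xs" by simp
    moreover have "length (filter P (us @ ws)) \<le> length (us @ ws)"
      by (rule length_filter_le)
    ultimately have "length xs \<ge> 3"
      and fewer: "length (us @ ws) - length (filter P (us @ ws)) < length xs - length (filter P xs)"
      using less.prems(3) xs by auto
    then have "cycle_time t (filter P (us @ ws)) \<le> cycle_time t (us @ ws)"
      using less.hyps[OF fewer] less.prems xs filter_eq by auto
    also have "\<dots> \<le> cycle_time t xs"
      using cycle_time_shortcut[OF tri] less.prems \<open>length xs \<ge> 3\<close> xs by auto
    finally show ?thesis using filter_eq by simp
  qed
qed

lemma is_cycle_complete_edges: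
  "is_cycle V (complete_edges V) xs \<longleftrightarrow> xs \<noteq> [] \<and> distinct xs \<and> set xs \<subseteq> V"
proof -
  have "{xs ! k, xs ! ((k + 1) mod length xs)} \<in> complete_edges V"
    if "distinct xs" "set xs \<subseteq> V" "length xs \<ge> 2" "k < length xs" for k
  proof -
    let ?k' = "(k + 1) mod length xs"
    have "?k' < length xs" "?k' \<noteq> k"
      using that(3,4) by (auto simp: mod_if)
    then have "xs ! k \<noteq> xs ! ?k'" "xs ! k \<in> V" "xs ! ?k' \<in> V"
      using that by (auto simp: nth_eq_iff_index_eq)
    then show ?thesis unfolding complete_edges_def by blast
  qed
  then show ?thesis by (auto simp: is_cycle_def)
qed

lemma cycle_min_crit_filter_ge:
  assumes "filter P xs \<noteq> []"
  shows "cycle_min_crit q xs \<le> cycle_min_crit q (filter P xs)"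
  unfolding cycle_min_crit_def using assms by (intro Min_antimono) (auto simp: filter_empty_conv)

lemma length_feasible_filter:
  assumes q_pos: "\<And>i. i \<in> V \<Longrightarrow> q i > 0" and tri: "triangle_on V t"
    and feas: "length_feasible V (complete_edges V) t q xs" and ne: "filter P xs \<noteq> []"
  shows "length_feasible V (complete_edges V) t q (filter P xs)"
proof -
  have "distinct xs" "set xs \<subseteq> V" and time: "cycle_time t xs \<le> cycle_min_crit q xs"
    using feas by (auto simp: length_feasible_def is_cycle_complete_edges)
  have "cycle_time t (filter P xs) \<le> cycle_min_crit q (filter P xs)"
  proof (cases "length (filter P xs) \<ge> 2")
    case True
    then show ?thesis
      using cycle_time_filter_le[OF tri \<open>distinct xs\<close> \<open>set xs \<subseteq> V\<close>] time
        cycle_min_crit_filter_ge[OF ne, of q] by fastforce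
  next
    case False
    have "0 < cycle_min_crit q (filter P xs)"
      unfolding cycle_min_crit_def using ne \<open>set xs \<subseteq> V\<close> q_pos
      by (subst Min_gr_iff) (auto simp: filter_empty_conv)
    then show ?thesis using False by (simp add: cycle_time_def)
  qed
  then show ?thesis
    using ne \<open>distinct xs\<close> \<open>set xs \<subseteq> V\<close>
    by (auto simp: length_feasible_def is_cycle_complete_edges)
qed

fun strip_covered :: "'a set \<Rightarrow> 'a list list \<Rightarrow> 'a list list" where
  "strip_covered S [] = []"
| "strip_covered S (C # Cs) =
     (let P = filter (\<lambda>x. x \<notin> S) C in if P = [] then [] else [P]) @ strip_covered (S \<union> set C) Cs"

lemma length_strip_covered: "length (strip_covered S Cs) \<le> length Cs"
  by (induction S Cs rule: strip_covered.induct) (auto simp: Let_def)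

lemma Union_strip_covered:
  "(\<Union>P \<in> set (strip_covered S Cs). set P) = (\<Union>C \<in> set Cs. set C) - S"
  by (induction S Cs rule: strip_covered.induct) (auto simp: Let_def filter_empty_conv)

lemma strip_covered_elem:
  "P \<in> set (strip_covered S Cs) \<Longrightarrow> \<exists>C \<in> set Cs. \<exists>S'. P = filter (\<lambda>x. x \<notin> S') C \<and> P \<noteq> []"
  by (induction S Cs rule: strip_covered.induct) (auto simp: Let_def split: if_splits)

lemma sorted_wrt_disjoint_strip_covered:
  "sorted_wrt (\<lambda>P Q. set P \<inter> set Q = {}) (strip_covered S Cs)"
proof (induction S Cs rule: strip_covered.induct)
  case (2 S C Cs)
  then show ?case
    using Union_strip_covered[of "S \<union> set C" Cs] by (auto simp: Let_def sorted_wrt_append)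
qed simp

lemma partitions_strip_covered:
  assumes "covers V Cs"
  shows "partitions V (strip_covered {} Cs)"
proof -
  have disjoint: "set (strip_covered {} Cs ! i) \<inter> set (strip_covered {} Cs ! j) = {}"
    if "i < j" "j < length (strip_covered {} Cs)" for i j
    using sorted_wrt_nth_less[OF sorted_wrt_disjoint_strip_covered that] .
  show ?thesis
    unfolding partitions_def
  proof (intro conjI allI impI)
    show "covers V (strip_covered {} Cs)"
      using assms Union_strip_covered[of "{}" Cs] by (simp add: covers_def)
    fix i j
    assume "i < length (strip_covered {} Cs)" "j < length (strip_covered {} Cs)" "i \<noteq> j"
    then show "set (strip_covered {} Cs ! i) \<inter> set (strip_covered {} Cs ! j) = {}"
      using disjoint[of i j] disjoint[of j i] by (cases "i < j") auto
  qed
qed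

lemma partition_of_cover:
  assumes q_pos: "\<And>i. i \<in> V \<Longrightarrow> q i > 0" and tri: "triangle_on V t"
    and feas: "\<forall>C \<in> set Cs. length_feasible V (complete_edges V) t q C" and cov: "covers V Cs"
  shows "\<exists>Ps. length Ps \<le> length Cs \<and> (\<forall>P \<in> set Ps. length_feasible V (complete_edges V) t q P)
               \<and> partitions V Ps"
proof (intro exI conjI ballI)
  fix P assume "P \<in> set (strip_covered {} Cs)"
  then obtain C S where "C \<in> set Cs" "P = filter (\<lambda>x. x \<notin> S) C" "P \<noteq> []"
    using strip_covered_elem by blast
  then show "length_feasible V (complete_edges V) t q P"
    using feas length_feasible_filter[OF q_pos tri] by simp
qed (simp_all add: length_strip_covered partitions_strip_covered cov)

lemma Least_eq_if_mutually_bounded: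
  fixes P Q :: "nat \<Rightarrow> bool"
  assumes "P n" and P_Q: "\<And>m. P m \<Longrightarrow> Q m" and Q_P: "\<And>m. Q m \<Longrightarrow> \<exists>k \<le> m. P k"
  shows "Least Q = Least P"
proof (rule antisym)
  have "P (Least P)" using \<open>P n\<close> by (rule LeastI)
  then show "Least Q \<le> Least P" by (intro Least_le P_Q)
  obtain k where "k \<le> Least Q" "P k"
    using Q_P LeastI[of Q, OF P_Q[OF \<open>P n\<close>]] by blast
  then show "Least P \<le> Least Q" using Least_le[of P k] by linarith
qed

theorem mainTheorem5:
  fixes V :: "'a set" and E :: "'a set set"
    and t :: "'a \<Rightarrow> 'a \<Rightarrow> real" and q :: "'a \<Rightarrow> real"
    and Cs :: "'a list list"
  assumes q_pos: "\<And>i. i \<in> V \<Longrightarrow> q i > 0"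
    and t_nonneg: "\<And>i j. i \<in> V \<Longrightarrow> j \<in> V \<Longrightarrow> i \<noteq> j \<Longrightarrow> t i j \<ge> 0"
    and t_sym: "\<And>i j. i \<in> V \<Longrightarrow> j \<in> V \<Longrightarrow> i \<noteq> j \<Longrightarrow> t i j = t j i"
    and complete: "E = {{i, j} | i j. i \<in> V \<and> j \<in> V \<and> i \<noteq> j}"
    and triangle: "\<And>i j k. i \<in> V \<Longrightarrow> j \<in> V \<Longrightarrow> k \<in> V \<Longrightarrow>
                     i \<noteq> j \<Longrightarrow> i \<noteq> k \<Longrightarrow> j \<noteq> k \<Longrightarrow> t i j \<le> t i k + t k j"
    and feas: "\<forall>C \<in> set Cs. length_feasible V E t q C"
    and cov: "covers V Cs"
  shows "(\<exists>Ps. length Ps \<le> length Cs \<and> (\<forall>P \<in> set Ps. length_feasible V E t q P)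
                \<and> partitions V Ps)
         \<and> (LEAST m. \<exists>Ds. length Ds = m \<and> (\<forall>D \<in> set Ds. length_feasible V E t q D) \<and> covers V Ds)
           = (LEAST m. \<exists>Ps. length Ps = m \<and> (\<forall>P \<in> set Ps. length_feasible V E t q P) \<and> partitions V Ps)"
proof -
  have E: "E = complete_edges V" using complete by (simp add: complete_edges_def)
  have tri: "triangle_on V t" using triangle by (simp add: triangle_on_def)
  have partition: "\<exists>Ps. length Ps \<le> length Ds \<and> (\<forall>P \<in> set Ps. length_feasible V E t q P)
                      \<and> partitions V Ps"
    if "\<forall>D \<in> set Ds. length_feasible V E t q D" "covers V Ds" for Ds
    using partition_of_cover[of V q t Ds] q_pos tri that unfolding E by blast
  obtain Ps where Ps: "length Ps \<le> length Cs" "\<forall>P \<in> set Ps. length_feasible V E t q P"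
    "partitions V Ps"
    using partition feas cov by blast
  have "(LEAST m. \<exists>Ds. length Ds = m \<and> (\<forall>D \<in> set Ds. length_feasible V E t q D) \<and> covers V Ds)
      = (LEAST m. \<exists>Ps. length Ps = m \<and> (\<forall>P \<in> set Ps. length_feasible V E t q P) \<and> partitions V Ps)"
  proof (rule Least_eq_if_mutually_bounded)
    fix m
    assume "\<exists>Ds. length Ds = m \<and> (\<forall>D \<in> set Ds. length_feasible V E t q D) \<and> covers V Ds"
    then show "\<exists>k \<le> m. \<exists>Ps. length Ps = k \<and> (\<forall>P \<in> set Ps. length_feasible V E t q P) \<and> partitions V Ps"
      using partition by blast
  qed (use Ps in \<open>auto simp: partitions_def\<close>)
  with Ps show ?thesis by blast
qed

end
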